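(* Let $N=\{1,\ldots,n\}$, $\mathcal{X}=\{-1,1\}^n$, and fix $p^\circ\in\Delta(\mathcal{X})$ with $p^\circ(x)>0$ for all $x\in\mathcal{X}$. For a deterministic voting rule $\phi:\mathcal{X}\to\{-1,1\}$: (1) $\phi$ is strictly efficient under $p^\circ$ if and only if it is a weighted majority rule with nonnegative weights such that there are no ties; (2) $\phi$ is efficient under $p^\circ$ if and only if it is a weighted majority rule with positive weights; (3) $\phi$ is weakly efficient under $p^\circ$ if and only if it is a weighted majority rule with nonnegative weights.
   Context: A random voting rule is a map $\bar\phi:\mathcal{X}\to[-1,1]$ (outcome $1$ with probability $(1+\bar\phi(x))/2$, else $-1$); deterministic rules are special cases. Under $p$, individual $i$'s responsiveness to $\bar\phi$ is $(E_p[\bar\phi(x)x_i]+1)/2$. A rule $\psi$ is weakly Pareto-preferred to $\phi$ under $p$ if every individual's responsiveness under $\psi$ is $\geq$ that under $\phi$; Pareto-preferred if additionally strict for at least one individual; strictly Pareto-preferred if strict for all individuals. $\phi$ is strictly efficient under $p$ if no other random rule is weakly Pareto-preferred to it; efficient if no random rule is Pareto-preferred to it; weakly efficient if no random rule is strictly Pareto-preferred to it. A weighted majority rule with nonzero weight vector $w\in\mathbb{R}^n$ satisfies $\phi(x)=1$ if $\sum_iw_ix_i>0$ and $\phi(x)=-1$ if $\sum_iw_ix_i<0$ (ties resolved arbitrarily); it has no ties if $\sum_iw_ix_i\neq0$ for all $x$. *)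

theory Defs
  imports Complex_Main
begin

text \<open>Individuals are the elements of a finite nonempty index type 'i (so n = CARD('i) \<ge> 1).
  A profile is a function 'i \<Rightarrow> real with every entry equal to -1 or 1.\<close>

definition profiles :: "('i::finite \<Rightarrow> real) set" where
  "profiles = {x. \<forall>i. x i = -1 \<or> x i = 1}"

definition is_dist :: "(('i::finite \<Rightarrow> real) \<Rightarrow> real) \<Rightarrow> bool" where
  "is_dist p \<longleftrightarrow> (\<forall>x\<in>profiles. p x \<ge> 0) \<and> (\<Sum>x\<in>profiles. p x) = 1"

definition random_rule :: "(('i::finite \<Rightarrow> real) \<Rightarrow> real) \<Rightarrow> bool" where
  "random_rule \<phi> \<longleftrightarrow> (\<forall>x\<in>profiles. -1 \<le> \<phi> x \<and> \<phi> x \<le> 1)"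

definition det_rule :: "(('i::finite \<Rightarrow> real) \<Rightarrow> real) \<Rightarrow> bool" where
  "det_rule \<phi> \<longleftrightarrow> (\<forall>x\<in>profiles. \<phi> x = -1 \<or> \<phi> x = 1)"

definition resp :: "(('i::finite \<Rightarrow> real) \<Rightarrow> real) \<Rightarrow> (('i \<Rightarrow> real) \<Rightarrow> real) \<Rightarrow> 'i \<Rightarrow> real" where
  "resp p \<phi> i = ((\<Sum>x\<in>profiles. p x * \<phi> x * x i) + 1) / 2"

definition weakly_pareto_pref where
  "weakly_pareto_pref p \<psi> \<phi> \<longleftrightarrow> (\<forall>i. resp p \<psi> i \<ge> resp p \<phi> i)"

definition pareto_pref where
  "pareto_pref p \<psi> \<phi> \<longleftrightarrow> weakly_pareto_pref p \<psi> \<phi> \<and> (\<exists>i. resp p \<psi> i > resp p \<phi> i)"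

definition strictly_pareto_pref where
  "strictly_pareto_pref p \<psi> \<phi> \<longleftrightarrow> (\<forall>i. resp p \<psi> i > resp p \<phi> i)"

text \<open>Rules are identified by their values on profiles; "another rule" means one differing
  from \<phi> at some profile.\<close>

definition strictly_efficient where
  "strictly_efficient p \<phi> \<longleftrightarrow>
     \<not> (\<exists>\<psi>. random_rule \<psi> \<and> (\<exists>x\<in>profiles. \<psi> x \<noteq> \<phi> x) \<and> weakly_pareto_pref p \<psi> \<phi>)"

definition efficient where
  "efficient p \<phi> \<longleftrightarrow> \<not> (\<exists>\<psi>. random_rule \<psi> \<and> pareto_pref p \<psi> \<phi>)"

definition weakly_efficient where
  "weakly_efficient p \<phi> \<longleftrightarrow> \<not> (\<exists>\<psi>. random_rule \<psi> \<and> strictly_pareto_pref p \<psi> \<phi>)"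

definition weighted_majority :: "('i::finite \<Rightarrow> real) \<Rightarrow> (('i \<Rightarrow> real) \<Rightarrow> real) \<Rightarrow> bool" where
  "weighted_majority w \<phi> \<longleftrightarrow> w \<noteq> (\<lambda>_. 0) \<and>
     (\<forall>x\<in>profiles. ((\<Sum>i\<in>UNIV. w i * x i) > 0 \<longrightarrow> \<phi> x = 1) \<and>
                    ((\<Sum>i\<in>UNIV. w i * x i) < 0 \<longrightarrow> \<phi> x = -1))"

definition no_ties :: "('i::finite \<Rightarrow> real) \<Rightarrow> bool" where
  "no_ties w \<longleftrightarrow> (\<forall>x\<in>profiles. (\<Sum>i\<in>UNIV. w i * x i) \<noteq> 0)"

end

theory Submission
  imports Defs "HOL-Analysis.Analysis"
begin

(* A weighted majority rule with weights w picks, at every profile x, the sign of w.x, so among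
  all random rules it maximises the w-weighted sum of the responsivenesses; with nonnegative,
  positive or tie-free weights this rules out strict, ordinary and weak Pareto improvements.
  Conversely, shrinking phi towards 0 at each profile x in proportion to l x >= 0 changes the
  responsiveness vector by a negative multiple of sum_x l x p x phi x x. Each form of
  efficiency thus says that a linear system in l >= 0 has no solution, and Farkas' lemma yields
  weights w >= 0 with phi x (w.x) >= 0 at all profiles, i.e. phi is a weighted majority rule
  for w. Positive weights (resp. absence of ties) come from adding up one such w for every
  individual (resp. every profile). *)

lemma finite_profiles: "finite (profiles :: ('i::finite \<Rightarrow> real) set)"
proof -
  have "profiles = (PiE UNIV (\<lambda>_. {-1, 1}) :: ('i \<Rightarrow> real) set)"
    by (auto simp: profiles_def PiE_def extensional_def)
  then show ?thesis by (metis finite_PiE finite_class.finite_UNIV finite.emptyI finite_insert)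
qed

lemma one_in_profiles: "(\<lambda>_. 1) \<in> profiles"
  by (simp add: profiles_def)

lemma det_rule_imp_random_rule: "det_rule \<phi> \<Longrightarrow> random_rule \<phi>"
  by (auto simp: det_rule_def random_rule_def)

section \<open>Farkas' lemma\<close>

lemma separating_hyperplane_finite_cone:
  fixes z :: "'a::euclidean_space"
  assumes "finite G" "z \<notin> convex_cone hull G"
  obtains w where "inner w z < 0" "\<And>g. g \<in> G \<Longrightarrow> inner w g \<ge> 0"
proof -
  obtain a b where ab: "inner a z < b" "\<And>x. x \<in> convex_cone hull G \<Longrightarrow> inner a x > b"
    using separating_hyperplane_closed_point[OF convex_convex_cone_hull
        closed_convex_cone_hull[OF assms(1)] assms(2)] by blast
  have "b < 0" using ab(2) convex_cone_hull_contains_0 by fastforce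
  have nonneg: "inner a g \<ge> 0" if "g \<in> G" for g
  proof (rule ccontr)
    assume neg: "\<not> inner a g \<ge> 0"
    have "(b / inner a g) *\<^sub>R g \<in> convex_cone hull G"
      using \<open>b < 0\<close> neg \<open>g \<in> G\<close>
      by (intro convex_cone_hull_mul hull_inc) (auto simp: divide_nonpos_neg)
    with ab(2) neg show False by fastforce
  qed
  show ?thesis using ab(1) \<open>b < 0\<close> nonneg by (intro that[of a]) auto
qed

lemma farkas_lemma_inequalities:
  fixes a :: "'x \<Rightarrow> 'i::finite \<Rightarrow> real" and z :: "'i \<Rightarrow> real"
  assumes "finite X"
    and unsolvable: "\<not> (\<exists>l. (\<forall>x\<in>X. 0 \<le> l x) \<and> (\<forall>i. (\<Sum>x\<in>X. l x * a x i) \<le> z i))"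
  obtains w where "\<forall>i. 0 \<le> w i" "\<forall>x\<in>X. 0 \<le> (\<Sum>i\<in>UNIV. w i * a x i)"
    "(\<Sum>i\<in>UNIV. w i * z i) < 0"
proof -
  \<comment> \<open>The unit vectors turn the equations of a cone representation into inequalities
    and force the separating vector to be nonnegative.\<close>
  define G :: "(real^'i) set" where "G = (\<lambda>x. \<chi> i. a x i) ` X \<union> range (\<lambda>i. axis i 1)"
  define C :: "(real^'i) set"
    where "C = {v. \<exists>l. (\<forall>x\<in>X. 0 \<le> l x) \<and> (\<forall>i. (\<Sum>x\<in>X. l x * a x i) \<le> v $ i)}"
  have "convex_cone C"
    unfolding convex_cone_iff
  proof (intro conjI ballI allI impI)
    show "0 \<in> C" unfolding C_def by (auto intro!: exI[of _ "\<lambda>_. 0"])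
  next
    fix u v assume "u \<in> C" "v \<in> C"
    then obtain l k where "\<forall>x\<in>X. 0 \<le> l x" "\<forall>i. (\<Sum>x\<in>X. l x * a x i) \<le> u $ i"
      "\<forall>x\<in>X. 0 \<le> k x" "\<forall>i. (\<Sum>x\<in>X. k x * a x i) \<le> v $ i"
      unfolding C_def by blast
    then show "u + v \<in> C" unfolding C_def
      by (auto intro!: exI[of _ "\<lambda>x. l x + k x"] simp: distrib_right sum.distrib add_mono)
  next
    fix v and c :: real assume "v \<in> C" "0 \<le> c"
    then obtain l where "\<forall>x\<in>X. 0 \<le> l x" "\<forall>i. (\<Sum>x\<in>X. l x * a x i) \<le> v $ i"
      unfolding C_def by blast
    with \<open>0 \<le> c\<close> show "c *\<^sub>R v \<in> C" unfolding C_def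
      by (auto intro!: exI[of _ "\<lambda>x. c * l x"] mult_left_mono
          simp: sum_distrib_left[symmetric] mult.assoc)
  qed
  moreover have "G \<subseteq> C"
  proof -
    have "(\<chi> i. a y i) \<in> C" if "y \<in> X" for y
      using that \<open>finite X\<close> unfolding C_def
      by (auto intro!: exI[of _ "\<lambda>x. if x = y then 1 else 0"] simp: if_distrib[of "\<lambda>c. c * _"] cong: if_cong)
    moreover have "axis i 1 \<in> C" for i
      unfolding C_def by (auto intro!: exI[of _ "\<lambda>_. 0"] simp: axis_def)
    ultimately show ?thesis unfolding G_def by blast
  qed
  ultimately have "convex_cone hull G \<subseteq> C" by (rule hull_minimal[rotated])
  moreover have "(\<chi> i. z i) \<notin> C" using unsolvable unfolding C_def by simp
  ultimately have "(\<chi> i. z i) \<notin> convex_cone hull G" by blast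
  moreover have "finite G" unfolding G_def using \<open>finite X\<close> by simp
  ultimately obtain w where w: "inner w (\<chi> i. z i) < 0" "\<And>g. g \<in> G \<Longrightarrow> inner w g \<ge> 0"
    using separating_hyperplane_finite_cone by blast
  have inner_eq: "inner w (vec_lambda f) = (\<Sum>i\<in>UNIV. w $ i * f i)" for f
    by (simp add: inner_vec_def)
  show ?thesis
  proof (rule that[of "\<lambda>i. w $ i"])
    show "\<forall>i. 0 \<le> w $ i" using w(2)[of "axis _ 1"] by (simp add: G_def inner_axis)
    show "\<forall>x\<in>X. 0 \<le> (\<Sum>i\<in>UNIV. w $ i * a x i)"
    proof
      fix x assume "x \<in> X"
      then have "vec_lambda (a x) \<in> G" unfolding G_def by blast
      from w(2)[OF this] show "0 \<le> (\<Sum>i\<in>UNIV. w $ i * a x i)" by (simp add: inner_eq)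
    qed
    show "(\<Sum>i\<in>UNIV. w $ i * z i) < 0" using w(1) by (simp add: inner_eq)
  qed
qed

section \<open>Weighted majority rules are efficient\<close>

lemma resp_diff:
  "resp p \<psi> i - resp p \<phi> i = (\<Sum>x\<in>profiles. p x * (\<psi> x - \<phi> x) * x i) / 2"
  by (simp add: resp_def diff_divide_distrib[symmetric] sum_subtractf[symmetric] algebra_simps)

lemma weighted_resp_diff:
  "(\<Sum>i\<in>UNIV. w i * (resp p \<psi> i - resp p \<phi> i)) =
     (\<Sum>x\<in>profiles. p x * (\<psi> x - \<phi> x) * (\<Sum>i\<in>UNIV. w i * x i)) / 2"
proof -
  have "(\<Sum>i\<in>UNIV. w i * (resp p \<psi> i - resp p \<phi> i)) =
      (\<Sum>i\<in>UNIV. \<Sum>x\<in>profiles. w i * (p x * (\<psi> x - \<phi> x) * x i)) / 2"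
    by (simp add: resp_diff sum_distrib_left sum_divide_distrib)
  also have "\<dots> = (\<Sum>x\<in>profiles. \<Sum>i\<in>UNIV. w i * (p x * (\<psi> x - \<phi> x) * x i)) / 2"
    by (subst sum.swap) (rule refl)
  also have "\<dots> = (\<Sum>x\<in>profiles. p x * (\<psi> x - \<phi> x) * (\<Sum>i\<in>UNIV. w i * x i)) / 2"
    by (simp add: sum_distrib_left mult_ac)
  finally show ?thesis .
qed

lemma weighted_majority_pointwise_optimal:
  assumes "weighted_majority w \<phi>" "random_rule \<psi>" "x \<in> profiles"
  shows "(\<psi> x - \<phi> x) * (\<Sum>i\<in>UNIV. w i * x i) \<le> 0"
    and "no_ties w \<Longrightarrow> \<psi> x \<noteq> \<phi> x \<Longrightarrow> (\<psi> x - \<phi> x) * (\<Sum>i\<in>UNIV. w i * x i) < 0"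
proof -
  have "-1 \<le> \<psi> x" "\<psi> x \<le> 1" using assms(2,3) by (auto simp: random_rule_def)
  moreover have "(\<Sum>i\<in>UNIV. w i * x i) > 0 \<Longrightarrow> \<phi> x = 1" "(\<Sum>i\<in>UNIV. w i * x i) < 0 \<Longrightarrow> \<phi> x = -1"
    using assms(1,3) by (auto simp: weighted_majority_def)
  ultimately show "(\<psi> x - \<phi> x) * (\<Sum>i\<in>UNIV. w i * x i) \<le> 0"
    and "no_ties w \<Longrightarrow> \<psi> x \<noteq> \<phi> x \<Longrightarrow> (\<psi> x - \<phi> x) * (\<Sum>i\<in>UNIV. w i * x i) < 0"
    using assms(3) by (cases "(\<Sum>i\<in>UNIV. w i * x i)" "0::real" rule: linorder_cases;
        force simp: no_ties_def mult_le_0_iff mult_less_0_iff)+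
qed

lemma weighted_majority_maximizes_weighted_resp:
  assumes "weighted_majority w \<phi>" "random_rule \<psi>" "\<forall>x\<in>profiles. 0 \<le> p x"
  shows "(\<Sum>i\<in>UNIV. w i * (resp p \<psi> i - resp p \<phi> i)) \<le> 0"
proof -
  have "p x * (\<psi> x - \<phi> x) * (\<Sum>i\<in>UNIV. w i * x i) \<le> 0" if "x \<in> profiles" for x
    using weighted_majority_pointwise_optimal(1)[OF assms(1,2) that] assms(3) that
    by (simp add: mult.assoc mult_nonneg_nonpos)
  then show ?thesis unfolding weighted_resp_diff by (simp add: sum_nonpos)
qed

lemma no_ties_weighted_majority_uniquely_maximizes_weighted_resp:
  assumes "weighted_majority w \<phi>" "no_ties w" "random_rule \<psi>" "\<forall>x\<in>profiles. 0 < p x"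
    and "y \<in> profiles" "\<psi> y \<noteq> \<phi> y"
  shows "(\<Sum>i\<in>UNIV. w i * (resp p \<psi> i - resp p \<phi> i)) < 0"
proof -
  define g where "g x = p x * ((\<psi> x - \<phi> x) * (\<Sum>i\<in>UNIV. w i * x i))" for x
  have "\<forall>x\<in>profiles. g x \<le> 0"
    using assms(4) weighted_majority_pointwise_optimal(1)[OF assms(1,3)]
    by (simp add: g_def mult_nonneg_nonpos less_imp_le)
  moreover have "\<exists>x\<in>profiles. g x < 0"
    using assms weighted_majority_pointwise_optimal(2)[OF assms(1,3,5,2,6)]
    unfolding g_def by (blast intro: mult_pos_neg)
  ultimately have "sum g profiles < 0"
    using sum_strict_mono_ex1[OF finite_profiles, of g "\<lambda>_. 0"] by simp
  then show ?thesis unfolding weighted_resp_diff g_def by (simp add: mult.assoc)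
qed

lemma nonneg_weighted_majority_imp_weakly_efficient:
  assumes "weighted_majority w \<phi>" "\<forall>i. 0 \<le> w i" "\<forall>x\<in>profiles. 0 \<le> p x"
  shows "weakly_efficient p \<phi>"
  unfolding weakly_efficient_def
proof
  assume "\<exists>\<psi>. random_rule \<psi> \<and> strictly_pareto_pref p \<psi> \<phi>"
  then obtain \<psi> where "random_rule \<psi>" and better: "\<forall>i. resp p \<psi> i > resp p \<phi> i"
    unfolding strictly_pareto_pref_def by blast
  obtain j where "w j \<noteq> 0" using assms(1) unfolding weighted_majority_def by auto
  have "0 < (\<Sum>i\<in>UNIV. w i * (resp p \<psi> i - resp p \<phi> i))"
    using \<open>w j \<noteq> 0\<close> assms(2) better
    by (intro sum_pos2[of UNIV j]) (auto simp: order_le_neq_trans less_imp_le)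
  with weighted_majority_maximizes_weighted_resp[OF assms(1) \<open>random_rule \<psi>\<close> assms(3)]
  show False by simp
qed

lemma pos_weighted_majority_imp_efficient:
  assumes "weighted_majority w \<phi>" "\<forall>i. 0 < w i" "\<forall>x\<in>profiles. 0 \<le> p x"
  shows "efficient p \<phi>"
  unfolding efficient_def
proof
  assume "\<exists>\<psi>. random_rule \<psi> \<and> pareto_pref p \<psi> \<phi>"
  then obtain \<psi> j where "random_rule \<psi>" and better: "\<forall>i. resp p \<psi> i \<ge> resp p \<phi> i"
    and "resp p \<psi> j > resp p \<phi> j"
    unfolding pareto_pref_def weakly_pareto_pref_def by blast
  have "0 < (\<Sum>i\<in>UNIV. w i * (resp p \<psi> i - resp p \<phi> i))"
    using \<open>resp p \<psi> j > resp p \<phi> j\<close> assms(2) better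
    by (intro sum_pos2[of UNIV j]) (auto simp: less_imp_le)
  with weighted_majority_maximizes_weighted_resp[OF assms(1) \<open>random_rule \<psi>\<close> assms(3)]
  show False by simp
qed

lemma no_ties_weighted_majority_imp_strictly_efficient:
  assumes "weighted_majority w \<phi>" "no_ties w" "\<forall>i. 0 \<le> w i" "\<forall>x\<in>profiles. 0 < p x"
  shows "strictly_efficient p \<phi>"
  unfolding strictly_efficient_def
proof
  assume "\<exists>\<psi>. random_rule \<psi> \<and> (\<exists>x\<in>profiles. \<psi> x \<noteq> \<phi> x) \<and> weakly_pareto_pref p \<psi> \<phi>"
  then obtain \<psi> y where "random_rule \<psi>" "y \<in> profiles" "\<psi> y \<noteq> \<phi> y"
    and better: "\<forall>i. resp p \<psi> i \<ge> resp p \<phi> i"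
    unfolding weakly_pareto_pref_def by blast
  have "0 \<le> (\<Sum>i\<in>UNIV. w i * (resp p \<psi> i - resp p \<phi> i))"
    using assms(3) better by (intro sum_nonneg) simp
  with no_ties_weighted_majority_uniquely_maximizes_weighted_resp[OF assms(1,2)
      \<open>random_rule \<psi>\<close> assms(4) \<open>y \<in> profiles\<close> \<open>\<psi> y \<noteq> \<phi> y\<close>]
  show False by simp
qed

section \<open>Efficient rules are weighted majority rules\<close>

definition shrink :: "(('i::finite \<Rightarrow> real) \<Rightarrow> real) \<Rightarrow> (('i \<Rightarrow> real) \<Rightarrow> real) \<Rightarrow> ('i \<Rightarrow> real) \<Rightarrow> real"
  where "shrink l \<phi> x = \<phi> x * (1 - l x / (1 + (\<Sum>y\<in>profiles. l y)))"

lemma shrink_factor_bounds: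
  fixes l :: "('i::finite \<Rightarrow> real) \<Rightarrow> real"
  assumes "\<forall>x\<in>profiles. 0 \<le> l x" "x \<in> profiles"
  shows "0 \<le> l x / (1 + (\<Sum>y\<in>profiles. l y))" "l x / (1 + (\<Sum>y\<in>profiles. l y)) < 1"
proof -
  have "l x \<le> (\<Sum>y\<in>profiles. l y)"
    by (rule member_le_sum) (use assms in \<open>auto simp: finite_profiles\<close>)
  then show "0 \<le> l x / (1 + (\<Sum>y\<in>profiles. l y))" "l x / (1 + (\<Sum>y\<in>profiles. l y)) < 1"
    using assms by auto
qed

lemma random_rule_shrink:
  assumes "random_rule \<phi>" "\<forall>x\<in>profiles. 0 \<le> l x"
  shows "random_rule (shrink l \<phi>)"
  unfolding random_rule_def
proof
  fix x :: "'a \<Rightarrow> real" assume "x \<in> profiles"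
  note factor = shrink_factor_bounds[OF assms(2) this]
  have "\<bar>\<phi> x\<bar> \<le> 1" using assms(1) \<open>x \<in> profiles\<close> by (simp add: random_rule_def abs_le_iff)
  moreover have "\<bar>shrink l \<phi> x\<bar> = \<bar>\<phi> x\<bar> * (1 - l x / (1 + (\<Sum>y\<in>profiles. l y)))"
    using factor by (simp add: shrink_def abs_mult)
  ultimately have "\<bar>shrink l \<phi> x\<bar> \<le> 1" using factor by (simp add: mult_le_one)
  then show "-1 \<le> shrink l \<phi> x \<and> shrink l \<phi> x \<le> 1" by (simp add: abs_le_iff)
qed

lemma resp_shrink:
  "resp p (shrink l \<phi>) i - resp p \<phi> i =
     - (\<Sum>x\<in>profiles. l x * (p x * \<phi> x * x i)) / (2 * (1 + (\<Sum>y\<in>profiles. l y)))"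
proof -
  let ?M = "1 + (\<Sum>y\<in>profiles. l y)"
  have "resp p (shrink l \<phi>) i - resp p \<phi> i =
      (\<Sum>x\<in>profiles. - (l x * (p x * \<phi> x * x i)) / ?M) / 2"
    unfolding resp_diff shrink_def by (simp add: algebra_simps)
  then show ?thesis by (simp add: sum_divide_distrib[symmetric] sum_negf)
qed

lemma shrink_neq:
  assumes "\<forall>x\<in>profiles. 0 \<le> l x" "x \<in> profiles" "0 < l x" "\<phi> x \<noteq> 0"
  shows "shrink l \<phi> x \<noteq> \<phi> x"
proof -
  have "0 < 1 + (\<Sum>y\<in>profiles. l y)" using assms(1) by (simp add: add_pos_nonneg sum_nonneg)
  with assms(3,4) show ?thesis by (simp add: shrink_def algebra_simps)
qed

lemma shrink_improves_resp:
  fixes l :: "('i::finite \<Rightarrow> real) \<Rightarrow> real"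
  assumes "\<forall>x\<in>profiles. 0 \<le> l x" "(\<Sum>x\<in>profiles. l x * (p x * \<phi> x * x i)) \<le> z"
  shows "z \<le> 0 \<Longrightarrow> resp p \<phi> i \<le> resp p (shrink l \<phi>) i"
    and "z < 0 \<Longrightarrow> resp p \<phi> i < resp p (shrink l \<phi>) i"
proof -
  let ?S = "\<Sum>x\<in>profiles. l x * (p x * \<phi> x * x i)"
  let ?D = "2 * (1 + (\<Sum>y\<in>profiles. l y))"
  have "0 < ?D" using assms(1) by (simp add: add_pos_nonneg sum_nonneg)
  show "resp p \<phi> i \<le> resp p (shrink l \<phi>) i" if "z \<le> 0"
  proof -
    have "0 \<le> - ?S / ?D" using \<open>0 < ?D\<close> assms(2) that by (intro divide_nonneg_pos) auto
    then show ?thesis using resp_shrink[of p l \<phi> i] by simp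
  qed
  show "resp p \<phi> i < resp p (shrink l \<phi>) i" if "z < 0"
  proof -
    have "0 < - ?S / ?D" using \<open>0 < ?D\<close> assms(2) that by (intro divide_pos_pos) auto
    then show ?thesis using resp_shrink[of p l \<phi> i] by simp
  qed
qed

(* As p x > 0, the second clause says phi x * (w.x) >= 0: phi follows the w-weighted majority
  at every profile where w does not tie. *)
definition supporting_weights ::
    "(('i::finite \<Rightarrow> real) \<Rightarrow> real) \<Rightarrow> (('i \<Rightarrow> real) \<Rightarrow> real) \<Rightarrow> ('i \<Rightarrow> real) \<Rightarrow> bool"
  where "supporting_weights p \<phi> w \<longleftrightarrow>
    (\<forall>i. 0 \<le> w i) \<and> (\<forall>x\<in>profiles. 0 \<le> (\<Sum>i\<in>UNIV. w i * (p x * \<phi> x * x i)))"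

lemma sum_weights_gain:
  fixes W :: "'k \<Rightarrow> 'i \<Rightarrow> 'a::semiring_0"
  shows "(\<Sum>i\<in>UNIV. (\<Sum>k\<in>K. W k i) * v i) = (\<Sum>k\<in>K. \<Sum>i\<in>UNIV. W k i * v i)"
  unfolding sum_distrib_right by (rule sum.swap)

lemma supporting_weights_sum:
  assumes "\<forall>k\<in>K. supporting_weights p \<phi> (W k)"
  shows "supporting_weights p \<phi> (\<lambda>i. \<Sum>k\<in>K. W k i)"
  using assms unfolding supporting_weights_def sum_weights_gain by (simp add: sum_nonneg)

lemma weighted_majority_if_supporting_weights:
  assumes "det_rule \<phi>" "\<forall>x\<in>profiles. 0 < p x" "supporting_weights p \<phi> w" "w \<noteq> (\<lambda>_. 0)"
  shows "weighted_majority w \<phi>"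
  unfolding weighted_majority_def
proof (intro conjI[OF \<open>w \<noteq> (\<lambda>_. 0)\<close>] ballI)
  fix x :: "'a \<Rightarrow> real" assume "x \<in> profiles"
  have "(\<Sum>i\<in>UNIV. w i * (p x * \<phi> x * x i)) = p x * (\<phi> x * (\<Sum>i\<in>UNIV. w i * x i))"
    by (simp add: sum_distrib_left mult_ac)
  moreover have "0 < p x" "0 \<le> (\<Sum>i\<in>UNIV. w i * (p x * \<phi> x * x i))"
    using assms(2,3) \<open>x \<in> profiles\<close> by (auto simp: supporting_weights_def)
  ultimately have "0 \<le> \<phi> x * (\<Sum>i\<in>UNIV. w i * x i)"
    by (simp add: zero_le_mult_iff)
  moreover have "\<phi> x = -1 \<or> \<phi> x = 1" using assms(1) \<open>x \<in> profiles\<close> by (simp add: det_rule_def)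
  ultimately show "((\<Sum>i\<in>UNIV. w i * x i) > 0 \<longrightarrow> \<phi> x = 1) \<and>
      ((\<Sum>i\<in>UNIV. w i * x i) < 0 \<longrightarrow> \<phi> x = -1)"
    by auto
qed

lemma weakly_efficient_imp_nonneg_weighted_majority:
  assumes "det_rule \<phi>" "\<forall>x\<in>profiles. 0 < p x" "weakly_efficient p \<phi>"
  shows "\<exists>w. weighted_majority w \<phi> \<and> (\<forall>i. 0 \<le> w i)"
proof -
  have "\<not> (\<exists>l. (\<forall>x\<in>profiles. 0 \<le> l x) \<and> (\<forall>i. (\<Sum>x\<in>profiles. l x * (p x * \<phi> x * x i)) \<le> -1))"
  proof
    assume "\<exists>l. (\<forall>x\<in>profiles. 0 \<le> l x) \<and> (\<forall>i. (\<Sum>x\<in>profiles. l x * (p x * \<phi> x * x i)) \<le> -1)"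
    then obtain l where l: "\<forall>x\<in>profiles. 0 \<le> l x"
      and below: "\<forall>i. (\<Sum>x\<in>profiles. l x * (p x * \<phi> x * x i)) \<le> -1" by blast
    have "strictly_pareto_pref p (shrink l \<phi>) \<phi>"
      unfolding strictly_pareto_pref_def using shrink_improves_resp(2)[OF l below[rule_format]] by simp
    moreover have "random_rule (shrink l \<phi>)"
      using random_rule_shrink[OF det_rule_imp_random_rule[OF assms(1)] l] .
    ultimately show False using assms(3) unfolding weakly_efficient_def by blast
  qed
  then obtain w where "\<forall>i. 0 \<le> w i" "\<forall>x\<in>profiles. 0 \<le> (\<Sum>i\<in>UNIV. w i * (p x * \<phi> x * x i))"
    and "(\<Sum>i\<in>UNIV. w i * -1) < 0"
    by (rule farkas_lemma_inequalities[OF finite_profiles, of "\<lambda>x i. p x * \<phi> x * x i" "\<lambda>_. -1"])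
  moreover from \<open>(\<Sum>i\<in>UNIV. w i * -1) < 0\<close> have "w \<noteq> (\<lambda>_. 0)" by auto
  ultimately show ?thesis
    using weighted_majority_if_supporting_weights[OF assms(1,2)] by (auto simp: supporting_weights_def)
qed

lemma efficient_imp_supporting_weights_at:
  assumes "det_rule \<phi>" "\<forall>x\<in>profiles. 0 < p x" "efficient p \<phi>"
  shows "\<exists>w. supporting_weights p \<phi> w \<and> 0 < w j"
proof -
  define z :: "'a \<Rightarrow> real" where "z i = (if i = j then -1 else 0)" for i
  have "\<not> (\<exists>l. (\<forall>x\<in>profiles. 0 \<le> l x) \<and> (\<forall>i. (\<Sum>x\<in>profiles. l x * (p x * \<phi> x * x i)) \<le> z i))"
  proof
    assume "\<exists>l. (\<forall>x\<in>profiles. 0 \<le> l x) \<and> (\<forall>i. (\<Sum>x\<in>profiles. l x * (p x * \<phi> x * x i)) \<le> z i)"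
    then obtain l where l: "\<forall>x\<in>profiles. 0 \<le> l x"
      and below: "\<forall>i. (\<Sum>x\<in>profiles. l x * (p x * \<phi> x * x i)) \<le> z i" by blast
    have "resp p \<phi> i \<le> resp p (shrink l \<phi>) i" for i
      using shrink_improves_resp(1)[OF l below[rule_format]] by (simp add: z_def)
    moreover have "resp p \<phi> j < resp p (shrink l \<phi>) j"
      using shrink_improves_resp(2)[OF l below[rule_format]] by (simp add: z_def)
    ultimately have "pareto_pref p (shrink l \<phi>) \<phi>"
      unfolding pareto_pref_def weakly_pareto_pref_def by blast
    moreover have "random_rule (shrink l \<phi>)"
      using random_rule_shrink[OF det_rule_imp_random_rule[OF assms(1)] l] .
    ultimately show False using assms(3) unfolding efficient_def by blast
  qed
  then obtain w where "\<forall>i. 0 \<le> w i" "\<forall>x\<in>profiles. 0 \<le> (\<Sum>i\<in>UNIV. w i * (p x * \<phi> x * x i))"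
    and "(\<Sum>i\<in>UNIV. w i * z i) < 0"
    by (rule farkas_lemma_inequalities[OF finite_profiles, of "\<lambda>x i. p x * \<phi> x * x i" z])
  moreover have "(\<Sum>i\<in>UNIV. w i * z i) = - w j"
    unfolding z_def by (simp add: if_distrib[of "\<lambda>c. _ * c"] cong: if_cong)
  ultimately show ?thesis unfolding supporting_weights_def by auto
qed

lemma efficient_imp_pos_weighted_majority:
  assumes "det_rule \<phi>" "\<forall>x\<in>profiles. 0 < p x" "efficient p \<phi>"
  shows "\<exists>w. weighted_majority w \<phi> \<and> (\<forall>i. 0 < w i)"
proof -
  have "\<forall>j. \<exists>w. supporting_weights p \<phi> w \<and> 0 < w j"
    using efficient_imp_supporting_weights_at[OF assms] by blast
  then obtain W where W: "\<forall>j. supporting_weights p \<phi> (W j) \<and> 0 < W j j"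
    by (rule choice[THEN exE])
  define w where "w = (\<lambda>i. \<Sum>j\<in>UNIV. W j i)"
  have "supporting_weights p \<phi> w" unfolding w_def using W by (intro supporting_weights_sum) simp
  moreover have pos: "0 < w i" for i
  proof -
    have "W i i \<le> w i"
      unfolding w_def using W by (intro member_le_sum) (auto simp: supporting_weights_def)
    with W show ?thesis by (meson less_le_trans)
  qed
  moreover from pos have "w \<noteq> (\<lambda>_. 0)" by (metis less_irrefl)
  ultimately show ?thesis using weighted_majority_if_supporting_weights[OF assms(1,2)] by blast
qed

lemma strictly_efficient_imp_supporting_weights_at:
  assumes "det_rule \<phi>" "\<forall>x\<in>profiles. 0 < p x" "strictly_efficient p \<phi>" "y \<in> profiles"
  shows "\<exists>w. supporting_weights p \<phi> w \<and> 0 < (\<Sum>i\<in>UNIV. w i * (p y * \<phi> y * y i))"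
proof -
  have "\<not> (\<exists>l. (\<forall>x\<in>profiles. 0 \<le> l x) \<and>
      (\<forall>i. (\<Sum>x\<in>profiles. l x * (p x * \<phi> x * x i)) \<le> - (p y * \<phi> y * y i)))"
  proof
    assume "\<exists>l. (\<forall>x\<in>profiles. 0 \<le> l x) \<and>
      (\<forall>i. (\<Sum>x\<in>profiles. l x * (p x * \<phi> x * x i)) \<le> - (p y * \<phi> y * y i))"
    then obtain l where l: "\<forall>x\<in>profiles. 0 \<le> l x"
      and below: "\<forall>i. (\<Sum>x\<in>profiles. l x * (p x * \<phi> x * x i)) \<le> - (p y * \<phi> y * y i)" by blast
    \<comment> \<open>The extra weight at y makes the shrunk rule differ from \<open>\<phi>\<close> at y.\<close>
    define l' where "l' x = l x + (if x = y then 1 else 0)" for x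
    have l': "\<forall>x\<in>profiles. 0 \<le> l' x" using l by (simp add: l'_def)
    have l'_sum: "(\<Sum>x\<in>profiles. l' x * (p x * \<phi> x * x i)) =
        (\<Sum>x\<in>profiles. l x * (p x * \<phi> x * x i)) + p y * \<phi> y * y i" for i
      using \<open>y \<in> profiles\<close>
      by (simp add: l'_def distrib_right sum.distrib if_distrib[of "\<lambda>c. c * _"] finite_profiles
          cong: if_cong)
    have "(\<Sum>x\<in>profiles. l' x * (p x * \<phi> x * x i)) \<le> 0" for i
      using l'_sum[of i] below[rule_format, of i] by linarith
    then have "weakly_pareto_pref p (shrink l' \<phi>) \<phi>"
      unfolding weakly_pareto_pref_def using shrink_improves_resp(1)[OF l'] by blast
    moreover have "shrink l' \<phi> y \<noteq> \<phi> y"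
    proof (rule shrink_neq[OF l' \<open>y \<in> profiles\<close>])
      show "0 < l' y" using l \<open>y \<in> profiles\<close> by (simp add: l'_def add_nonneg_pos)
      show "\<phi> y \<noteq> 0" using assms(1) \<open>y \<in> profiles\<close> by (auto simp: det_rule_def)
    qed
    moreover have "random_rule (shrink l' \<phi>)"
      using random_rule_shrink[OF det_rule_imp_random_rule[OF assms(1)] l'] .
    ultimately show False using assms(3,4) unfolding strictly_efficient_def by blast
  qed
  then obtain w where "\<forall>i. 0 \<le> w i" "\<forall>x\<in>profiles. 0 \<le> (\<Sum>i\<in>UNIV. w i * (p x * \<phi> x * x i))"
    and "(\<Sum>i\<in>UNIV. w i * - (p y * \<phi> y * y i)) < 0"
    by (rule farkas_lemma_inequalities[OF finite_profiles, of "\<lambda>x i. p x * \<phi> x * x i"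
          "\<lambda>i. - (p y * \<phi> y * y i)"])
  then show ?thesis unfolding supporting_weights_def by (auto simp: sum_negf)
qed

lemma strictly_efficient_imp_no_ties_weighted_majority:
  assumes "det_rule \<phi>" "\<forall>x\<in>profiles. 0 < p x" "strictly_efficient p \<phi>"
  shows "\<exists>w. weighted_majority w \<phi> \<and> (\<forall>i. 0 \<le> w i) \<and> no_ties w"
proof -
  have "\<forall>y\<in>profiles. \<exists>w. supporting_weights p \<phi> w \<and> 0 < (\<Sum>i\<in>UNIV. w i * (p y * \<phi> y * y i))"
    using strictly_efficient_imp_supporting_weights_at[OF assms] by blast
  then obtain W where W: "\<forall>y\<in>profiles. supporting_weights p \<phi> (W y) \<and>
      0 < (\<Sum>i\<in>UNIV. W y i * (p y * \<phi> y * y i))"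
    by (rule bchoice[THEN exE])
  define w where "w = (\<lambda>i. \<Sum>y\<in>profiles. W y i)"
  have supp: "supporting_weights p \<phi> w" unfolding w_def using W by (intro supporting_weights_sum) simp
  have gain_pos: "0 < (\<Sum>i\<in>UNIV. w i * (p x * \<phi> x * x i))" if "x \<in> profiles" for x
  proof -
    have "(\<Sum>i\<in>UNIV. W x i * (p x * \<phi> x * x i)) \<le> (\<Sum>y\<in>profiles. \<Sum>i\<in>UNIV. W y i * (p x * \<phi> x * x i))"
      using W that by (intro member_le_sum) (auto simp: finite_profiles supporting_weights_def)
    also have "\<dots> = (\<Sum>i\<in>UNIV. w i * (p x * \<phi> x * x i))"
      unfolding w_def sum_weights_gain ..
    finally show ?thesis using W that by (blast intro: less_le_trans)
  qed
  have "no_ties w"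
    unfolding no_ties_def
  proof
    fix x :: "'a \<Rightarrow> real" assume "x \<in> profiles"
    have "(\<Sum>i\<in>UNIV. w i * (p x * \<phi> x * x i)) = p x * \<phi> x * (\<Sum>i\<in>UNIV. w i * x i)"
      by (simp add: sum_distrib_left mult_ac)
    with gain_pos[OF \<open>x \<in> profiles\<close>] show "(\<Sum>i\<in>UNIV. w i * x i) \<noteq> 0" by auto
  qed
  moreover from this have "w \<noteq> (\<lambda>_. 0)" using one_in_profiles by (auto simp: no_ties_def)
  ultimately show ?thesis
    using weighted_majority_if_supporting_weights[OF assms(1,2) supp] supp
    by (auto simp: supporting_weights_def)
qed

theorem propositionB:
  fixes p :: "('i::finite \<Rightarrow> real) \<Rightarrow> real" and \<phi> :: "('i \<Rightarrow> real) \<Rightarrow> real"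
  assumes "is_dist p" and "\<forall>x\<in>profiles. p x > 0" and "det_rule \<phi>"
  shows "(strictly_efficient p \<phi> \<longleftrightarrow>
            (\<exists>w. weighted_majority w \<phi> \<and> (\<forall>i. w i \<ge> 0) \<and> no_ties w))
       \<and> (efficient p \<phi> \<longleftrightarrow> (\<exists>w. weighted_majority w \<phi> \<and> (\<forall>i. w i > 0)))
       \<and> (weakly_efficient p \<phi> \<longleftrightarrow> (\<exists>w. weighted_majority w \<phi> \<and> (\<forall>i. w i \<ge> 0)))"
proof -
  have p_nonneg: "\<forall>x\<in>profiles. 0 \<le> p x" using assms(1) by (simp add: is_dist_def)
  show ?thesis
    using strictly_efficient_imp_no_ties_weighted_majority[OF assms(3,2)]
      no_ties_weighted_majority_imp_strictly_efficient[OF _ _ _ assms(2)]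
      efficient_imp_pos_weighted_majority[OF assms(3,2)]
      pos_weighted_majority_imp_efficient[OF _ _ p_nonneg]
      weakly_efficient_imp_nonneg_weighted_majority[OF assms(3,2)]
      nonneg_weighted_majority_imp_weakly_efficient[OF _ _ p_nonneg]
    by blast
qed

end
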